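(* Let $\mathcal{R}$ be a finite set of $K$ records, $n\in\mathbb{N}$, $\theta\in(0,1)$, $p$ a pmf on $\mathcal{R}$, and $\mathcal{F}:\mathcal{H}^n\times\mathcal{H}^n\to[0,\infty)$ a distortion measure. Then there exists a database sanitizing mechanism $(\mathbb{W}(\cdot|\underline a):\underline a\in\mathcal{R}^n)$ such that (i) $\mathbb{W}(\cdot|\underline a)=\mathbb{W}(\cdot|\underline{\tilde a})$ whenever $\mathtt{h}(\underline a)=\mathtt{h}(\underline{\tilde a})$; (ii) $\mathbb{W}(\underline b|\underline a)/\mathbb{W}(\underline b|\underline{\hat a})\in[\theta,1/\theta]$ for every pair of neighboring databases $\underline a,\underline{\hat a}$ and every database $\underline b$; and (iii) $D^n(\mathbb{W})\le D^n(\mathbb{U})$ for every $\theta$-DP database sanitizing mechanism $\mathbb{U}$.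
   Context: A database is $\underline r=(r_1,\dots,r_n)\in\mathcal{R}^n$; its histogram $\mathtt{h}(\underline r)\in\mathcal{H}^n:=\{(h_1,\dots,h_K)\in\mathbb{Z}^K:h_k\ge0,\sum_kh_k=n\}$ has $k$-th entry the number of $i$ with $r_i=a_k$, where $\mathcal{R}=\{a_1,\dots,a_K\}$. Databases are neighboring if they differ in exactly one entry. A database sanitizing mechanism assigns to each $\underline r\in\mathcal{R}^n$ a pmf $\mathbb{W}(\cdot|\underline r)$ on $\mathcal{R}^n$; it is $\theta$-DP if $\theta\mathbb{W}(\underline s|\underline r)\le\mathbb{W}(\underline s|\underline{\hat r})\le\theta^{-1}\mathbb{W}(\underline s|\underline r)$ for all neighboring $\underline r,\underline{\hat r}$ and all $\underline s$. Its expected distortion is $D^n(\mathbb{W})=\sum_{\underline r,\underline s\in\mathcal{R}^n}\prod_{i=1}^n p(r_i)\,\mathbb{W}(\underline s|\underline r)\,\mathcal{F}(\mathtt{h}(\underline r),\mathtt{h}(\underline s))$. *)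

theory Defs
  imports Complex_Main
begin

text \<open>Records form a finite type 'r (so K = CARD('r)). A database of size n is a
list of records of length n; entry i is the record at index i < n.\<close>

definition databases :: "nat \<Rightarrow> 'r list set" where
  "databases n = {xs. length xs = n}"

definition hist :: "'r list \<Rightarrow> ('r \<Rightarrow> nat)" where
  "hist xs = (\<lambda>a. count_list xs a)"

definition hist_space :: "nat \<Rightarrow> ('r::finite \<Rightarrow> nat) set" where
  "hist_space n = {h. (\<Sum>a\<in>UNIV. h a) = n}"

definition neighboring :: "nat \<Rightarrow> 'r list \<Rightarrow> 'r list \<Rightarrow> bool" where
  "neighboring n r r' \<longleftrightarrow> length r = n \<and> length r' = n \<and>
     card {i. i < n \<and> r ! i \<noteq> r' ! i} = 1"

text \<open>A database sanitizing mechanism: W s r = W(s | r), a pmf on R^n for each r in R^n.\<close>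
definition mechanism :: "nat \<Rightarrow> ('r list \<Rightarrow> 'r list \<Rightarrow> real) \<Rightarrow> bool" where
  "mechanism n W \<longleftrightarrow> (\<forall>r\<in>databases n.
      (\<forall>s\<in>databases n. 0 \<le> W s r) \<and> (\<Sum>s\<in>databases n. W s r) = 1)"

definition is_DP :: "nat \<Rightarrow> real \<Rightarrow> ('r list \<Rightarrow> 'r list \<Rightarrow> real) \<Rightarrow> bool" where
  "is_DP n \<theta> W \<longleftrightarrow> (\<forall>r r' s. neighboring n r r' \<longrightarrow> s \<in> databases n \<longrightarrow>
      \<theta> * W s r \<le> W s r' \<and> W s r' \<le> W s r / \<theta>)"

definition distortion :: "nat \<Rightarrow> ('r \<Rightarrow> real) \<Rightarrow> (('r \<Rightarrow> nat) \<Rightarrow> ('r \<Rightarrow> nat) \<Rightarrow> real)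
    \<Rightarrow> ('r list \<Rightarrow> 'r list \<Rightarrow> real) \<Rightarrow> real" where
  "distortion n p F W = (\<Sum>r\<in>databases n. \<Sum>s\<in>databases n.
      (\<Prod>i<n. p (r ! i)) * W s r * F (hist r) (hist s))"

end

theory Submission
  imports Defs "HOL-Combinatorics.Permutations" "HOL-Analysis.Analysis"
begin

(* The constraints defining a theta-DP mechanism are closed conditions on the values W(s|r),
   which lie in [0,1] and may be taken to vanish off R^n; so the theta-DP mechanisms form a compact
   set, on which the distortion, being linear in W, attains its minimum at some W0. Averaging W0
   over all permutations of the entries of the input database preserves the mechanism and DP
   constraints (permutations preserve neighbourhood) as well as the distortion (the weight
   p(r_1)...p(r_n) and the histogram of r are permutation invariant), and the average depends on
   the input only through its histogram. *)

lemma finite_databases: "finite (databases n :: 'r::finite list set)"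
  using finite_lists_length_eq[of "UNIV :: 'r set" n] by (simp add: databases_def)

lemma databases_nonempty: "databases n \<noteq> {}"
proof -
  have "replicate n undefined \<in> databases n" by (simp add: databases_def)
  then show ?thesis by blast
qed

lemma neighboring_sym: "neighboring n a a' \<Longrightarrow> neighboring n a' a"
  unfolding neighboring_def by (simp add: eq_commute)

lemma neighboring_databases: "neighboring n a a' \<Longrightarrow> a \<in> databases n \<and> a' \<in> databases n"
  unfolding neighboring_def databases_def by simp

lemma mechanism_le_1:
  fixes W :: "'r::finite list \<Rightarrow> 'r list \<Rightarrow> real"
  assumes "mechanism n W" "r \<in> databases n" "s \<in> databases n"
  shows "W s r \<le> 1"
proof -
  have "\<forall>t\<in>databases n. 0 \<le> W t r" and sum_1: "(\<Sum>t\<in>databases n. W t r) = 1"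
    using assms(1,2) unfolding mechanism_def by blast+
  then have "W s r \<le> (\<Sum>t\<in>databases n. W t r)"
    using assms(3) finite_databases[of n] by (intro member_le_sum) simp_all
  also have "\<dots> = 1" by (fact sum_1)
  finally show ?thesis .
qed

lemma hist_eq_iff_mset_eq: "hist xs = hist ys \<longleftrightarrow> mset xs = mset ys"
  by (simp add: hist_def fun_eq_iff multiset_eq_iff flip: count_mset)

lemma hist_permute_list: "\<sigma> permutes {..<length xs} \<Longrightarrow> hist (permute_list \<sigma> xs) = hist xs"
  by (simp add: hist_eq_iff_mset_eq)

lemma prod_permute_list:
  assumes "\<sigma> permutes {..<length xs}"
  shows "(\<Prod>i<length xs. f (permute_list \<sigma> xs ! i)) = (\<Prod>i<length xs. f (xs ! i))"
proof -
  have "(\<Prod>i<length xs. f (xs ! i)) = (\<Prod>i<length xs. f (xs ! \<sigma> i))"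
    using prod.permute[OF assms, of "\<lambda>i. f (xs ! i)"] by simp
  also have "\<dots> = (\<Prod>i<length xs. f (permute_list \<sigma> xs ! i))"
    using assms by (simp add: permute_list_nth)
  finally show ?thesis by simp
qed

lemma neighboring_permute_list:
  assumes "neighboring n a a'" "\<sigma> permutes {..<n}"
  shows "neighboring n (permute_list \<sigma> a) (permute_list \<sigma> a')"
proof -
  have len: "length a = n" "length a' = n"
    using assms(1) by (auto simp: neighboring_def)
  have "{i. i < n \<and> permute_list \<sigma> a ! i \<noteq> permute_list \<sigma> a' ! i}
      = \<sigma> -` {j. j < n \<and> a ! j \<noteq> a' ! j}"
  proof (rule set_eqI)
    fix i
    have "\<sigma> i < n \<longleftrightarrow> i < n"
      using permutes_in_image[OF assms(2)] by simp
    then show "i \<in> {i. i < n \<and> permute_list \<sigma> a ! i \<noteq> permute_list \<sigma> a' ! i}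
        \<longleftrightarrow> i \<in> \<sigma> -` {j. j < n \<and> a ! j \<noteq> a' ! j}"
      using assms(2) by (cases "i < n") (simp_all add: len permute_list_nth)
  qed
  moreover have "card (\<sigma> -` {j. j < n \<and> a ! j \<noteq> a' ! j}) = card {j. j < n \<and> a ! j \<noteq> a' ! j}"
    using permutes_bij[OF assms(2)] by (intro card_vimage_inj) (auto simp: bij_def)
  ultimately show ?thesis
    using assms(1) by (simp add: neighboring_def)
qed

lemma permute_list_inv_cancel:
  assumes "\<sigma> permutes {..<length xs}"
  shows "permute_list (inv \<sigma>) (permute_list \<sigma> xs) = xs"
    and "permute_list \<sigma> (permute_list (inv \<sigma>) xs) = xs"
proof -
  have inv: "inv \<sigma> permutes {..<length xs}"
    using assms by (rule permutes_inv)
  have "permute_list (\<sigma> \<circ> inv \<sigma>) xs = permute_list (inv \<sigma>) (permute_list \<sigma> xs)"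
    using inv by (rule permute_list_compose)
  then show "permute_list (inv \<sigma>) (permute_list \<sigma> xs) = xs"
    using permutes_inv_o(1)[OF assms] by simp
  have "permute_list (inv \<sigma> \<circ> \<sigma>) xs = permute_list \<sigma> (permute_list (inv \<sigma>) xs)"
    using assms by (rule permute_list_compose)
  then show "permute_list \<sigma> (permute_list (inv \<sigma>) xs) = xs"
    using permutes_inv_o(2)[OF assms] by simp
qed

lemma bij_betw_permute_list_databases:
  assumes "\<sigma> permutes {..<n}"
  shows "bij_betw (permute_list \<sigma>) (databases n) (databases n)"
  by (rule bij_betw_byWitness[where f' = "permute_list (inv \<sigma>)"])
    (use assms permute_list_inv_cancel[of \<sigma>] in \<open>auto simp: databases_def\<close>)

definition permutation_average :: "nat \<Rightarrow> ('r list \<Rightarrow> 'r list \<Rightarrow> real) \<Rightarrow> 'r list \<Rightarrow> 'r list \<Rightarrow> real" where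
  "permutation_average n W b a = (\<Sum>\<sigma> | \<sigma> permutes {..<n}. W b (permute_list \<sigma> a)) / fact n"

lemma card_permutations_lessThan: "card {\<sigma>. \<sigma> permutes {..<n}} = fact n"
  by (rule card_permutations) simp_all

lemma permutation_average_permute_list:
  assumes "\<tau> permutes {..<n}" "length a = n"
  shows "permutation_average n W b (permute_list \<tau> a) = permutation_average n W b a"
proof -
  have "(\<Sum>\<sigma> | \<sigma> permutes {..<n}. W b (permute_list \<sigma> (permute_list \<tau> a)))
      = (\<Sum>\<sigma> | \<sigma> permutes {..<n}. W b (permute_list (\<tau> \<circ> \<sigma>) a))"
    using assms(2) by (intro sum.cong) (simp_all add: permute_list_compose)
  also have "\<dots> = (\<Sum>\<sigma> | \<sigma> permutes {..<n}. W b (permute_list \<sigma> a))"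
    using setum_permutations_compose_left[OF assms(1), of "\<lambda>\<sigma>. W b (permute_list \<sigma> a)"] by simp
  finally show ?thesis
    by (simp add: permutation_average_def)
qed

lemma permutation_average_hist_eq:
  assumes "length a = n" "hist a = hist a'"
  shows "permutation_average n W b a = permutation_average n W b a'"
proof -
  have "mset a = mset a'"
    using assms(2) by (simp add: hist_eq_iff_mset_eq)
  then obtain \<tau> where "\<tau> permutes {..<length a'}" "permute_list \<tau> a' = a"
    by (rule mset_eq_permutation)
  moreover have "length a' = n"
    using \<open>mset a = mset a'\<close> assms(1) by (metis size_mset)
  ultimately show ?thesis
    using permutation_average_permute_list[of \<tau> n a' W b] by simp
qed

lemma mechanism_permutation_average:
  fixes W :: "'r::finite list \<Rightarrow> 'r list \<Rightarrow> real"
  assumes "mechanism n W"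
  shows "mechanism n (permutation_average n W)"
  unfolding mechanism_def
proof (intro ballI conjI)
  fix r s :: "'r list"
  assume "r \<in> databases n" and s: "s \<in> databases n"
  then have "permute_list \<sigma> r \<in> databases n" for \<sigma>
    by (simp add: databases_def)
  with assms s show "0 \<le> permutation_average n W s r"
    by (auto simp: permutation_average_def mechanism_def intro!: sum_nonneg divide_nonneg_pos)
next
  fix r :: "'r list"
  assume "r \<in> databases n"
  then have permuted: "permute_list \<sigma> r \<in> databases n" for \<sigma>
    by (simp add: databases_def)
  have "(\<Sum>s\<in>databases n. permutation_average n W s r)
      = (\<Sum>\<sigma> | \<sigma> permutes {..<n}. \<Sum>s\<in>databases n. W s (permute_list \<sigma> r)) / fact n"
    by (simp add: permutation_average_def sum.swap[of _ "databases n"] flip: sum_divide_distrib)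
  also have "\<dots> = (\<Sum>\<sigma> | \<sigma> permutes {..<n}. 1) / fact n"
    using assms permuted by (simp add: mechanism_def)
  finally show "(\<Sum>s\<in>databases n. permutation_average n W s r) = 1"
    by (simp add: card_permutations_lessThan)
qed

lemma is_DP_permutation_average:
  fixes W :: "'r list \<Rightarrow> 'r list \<Rightarrow> real"
  assumes "is_DP n \<theta> W"
  shows "is_DP n \<theta> (permutation_average n W)"
  unfolding is_DP_def
proof (intro allI impI conjI)
  fix r r' s :: "'r list"
  assume "neighboring n r r'" "s \<in> databases n"
  then have each: "\<theta> * W s (permute_list \<sigma> r) \<le> W s (permute_list \<sigma> r')"
    "W s (permute_list \<sigma> r') \<le> W s (permute_list \<sigma> r) / \<theta>"
    if "\<sigma> permutes {..<n}" for \<sigma>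
    using assms neighboring_permute_list[OF _ that] by (auto simp: is_DP_def)
  let ?P = "{\<sigma>. \<sigma> permutes {..<n}}"
  have "\<theta> * (\<Sum>\<sigma>\<in>?P. W s (permute_list \<sigma> r)) \<le> (\<Sum>\<sigma>\<in>?P. W s (permute_list \<sigma> r'))"
    unfolding sum_distrib_left using each(1) by (intro sum_mono) simp
  then have "\<theta> * (\<Sum>\<sigma>\<in>?P. W s (permute_list \<sigma> r)) / fact n \<le> (\<Sum>\<sigma>\<in>?P. W s (permute_list \<sigma> r')) / fact n"
    by (rule divide_right_mono) simp
  then show "\<theta> * permutation_average n W s r \<le> permutation_average n W s r'"
    by (simp add: permutation_average_def)
  have "(\<Sum>\<sigma>\<in>?P. W s (permute_list \<sigma> r')) \<le> (\<Sum>\<sigma>\<in>?P. W s (permute_list \<sigma> r)) / \<theta>"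
    unfolding sum_divide_distrib using each(2) by (intro sum_mono) simp
  then have "(\<Sum>\<sigma>\<in>?P. W s (permute_list \<sigma> r')) / fact n \<le> (\<Sum>\<sigma>\<in>?P. W s (permute_list \<sigma> r)) / \<theta> / fact n"
    by (rule divide_right_mono) simp
  then show "permutation_average n W s r' \<le> permutation_average n W s r / \<theta>"
    by (simp add: permutation_average_def divide_divide_eq_left mult.commute)
qed

lemma distortion_permute_input:
  fixes W :: "'r::finite list \<Rightarrow> 'r list \<Rightarrow> real"
  assumes "\<sigma> permutes {..<n}"
  shows "distortion n p F (\<lambda>s r. W s (permute_list \<sigma> r)) = distortion n p F W"
proof -
  define g where "g r = (\<Sum>s\<in>databases n. (\<Prod>i<n. p (r ! i)) * W s r * F (hist r) (hist s))"
    for r :: "'r list"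
  have "g (permute_list \<sigma> r) = (\<Sum>s\<in>databases n. (\<Prod>i<n. p (r ! i)) * W s (permute_list \<sigma> r) * F (hist r) (hist s))"
    if "r \<in> databases n" for r
    using that assms prod_permute_list[of \<sigma> r p] hist_permute_list[of \<sigma> r]
    by (simp add: g_def databases_def)
  then have "distortion n p F (\<lambda>s r. W s (permute_list \<sigma> r)) = (\<Sum>r\<in>databases n. g (permute_list \<sigma> r))"
    by (simp add: distortion_def)
  also have "\<dots> = (\<Sum>r\<in>databases n. g r)"
    using bij_betw_permute_list_databases[OF assms] by (rule sum.reindex_bij_betw)
  also have "\<dots> = distortion n p F W"
    by (simp add: distortion_def g_def)
  finally show ?thesis .
qed

lemma distortion_permutation_average:
  fixes W :: "'r::finite list \<Rightarrow> 'r list \<Rightarrow> real"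
  shows "distortion n p F (permutation_average n W) = distortion n p F W"
proof -
  let ?P = "{\<sigma>. \<sigma> permutes {..<n}}"
  have "distortion n p F (permutation_average n W)
      = (\<Sum>\<sigma>\<in>?P. distortion n p F (\<lambda>s r. W s (permute_list \<sigma> r))) / fact n"
    by (simp add: distortion_def permutation_average_def sum_distrib_left sum_distrib_right
        sum.swap[of _ ?P] flip: sum_divide_distrib)
  also have "\<dots> = (\<Sum>\<sigma>\<in>?P. distortion n p F W) / fact n"
    by (simp add: distortion_permute_input)
  also have "\<dots> = distortion n p F W"
    by (simp add: card_permutations_lessThan)
  finally show ?thesis .
qed

lemma continuous_on_eval2: "continuous_on S (\<lambda>W :: 'a \<Rightarrow> 'b \<Rightarrow> 'c::topological_space. W s r)"
proof -
  have "continuous_on UNIV (\<lambda>W :: 'a \<Rightarrow> 'b \<Rightarrow> 'c. W s)"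
    by (rule continuous_on_product_coordinates)
  then have "continuous_on UNIV (\<lambda>W :: 'a \<Rightarrow> 'b \<Rightarrow> 'c. W s r)"
    by (rule continuous_on_product_then_coordinatewise)
  then show ?thesis
    by (rule continuous_on_subset) simp
qed

lemma compact_PiE_UNIV:
  fixes S :: "'a \<Rightarrow> 'b::topological_space set"
  assumes "\<And>x. compact (S x)"
  shows "compact (PiE UNIV S)"
proof -
  have "compactin (product_topology (\<lambda>_. euclidean) UNIV) (PiE UNIV S)"
    using assms by (simp add: compactin_PiE)
  then show ?thesis
    by (simp add: euclidean_product_topology)
qed

lemma closed_mechanisms: "closed {W :: 'r::finite list \<Rightarrow> 'r list \<Rightarrow> real. mechanism n W}"
  unfolding mechanism_def Ball_def
  by (intro closed_Collect_all closed_Collect_imp closed_Collect_conj closed_Collect_le closed_Collect_eq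
      open_Collect_const continuous_intros continuous_on_eval2)

lemma closed_is_DP: "closed {W :: 'r list \<Rightarrow> 'r list \<Rightarrow> real. is_DP n \<theta> W}"
  unfolding is_DP_def divide_inverse
  by (intro closed_Collect_all closed_Collect_imp closed_Collect_conj closed_Collect_le
      open_Collect_const continuous_intros continuous_on_eval2)

lemma continuous_on_distortion: "continuous_on S (distortion n p F :: ('r::finite list \<Rightarrow> 'r list \<Rightarrow> real) \<Rightarrow> real)"
  unfolding distortion_def
  by (intro continuous_intros continuous_on_eval2)

(* Values of a mechanism outside R^n x R^n are unconstrained; setting them to zero confines the
   minimisation to the compact box below without changing constraints or distortion. *)
definition restrict_databases :: "nat \<Rightarrow> ('r list \<Rightarrow> 'r list \<Rightarrow> real) \<Rightarrow> 'r list \<Rightarrow> 'r list \<Rightarrow> real" where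
  "restrict_databases n W s r = (if s \<in> databases n \<and> r \<in> databases n then W s r else 0)"

definition mechanism_box :: "nat \<Rightarrow> ('r list \<Rightarrow> 'r list \<Rightarrow> real) set" where
  "mechanism_box n = (\<Pi>\<^sub>E s\<in>UNIV. \<Pi>\<^sub>E r\<in>UNIV. if s \<in> databases n \<and> r \<in> databases n then {0..1} else {0})"

lemma compact_mechanism_box: "compact (mechanism_box n)"
  unfolding mechanism_box_def by (intro compact_PiE_UNIV) simp

lemma restrict_databases_in_mechanism_box:
  fixes W :: "'r::finite list \<Rightarrow> 'r list \<Rightarrow> real"
  assumes "mechanism n W"
  shows "restrict_databases n W \<in> mechanism_box n"
  using assms mechanism_le_1[OF assms]
  by (auto simp: mechanism_box_def restrict_databases_def mechanism_def)

lemma mechanism_restrict_databases: "mechanism n W \<Longrightarrow> mechanism n (restrict_databases n W)"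
  by (simp add: mechanism_def restrict_databases_def)

lemma is_DP_restrict_databases: "is_DP n \<theta> W \<Longrightarrow> is_DP n \<theta> (restrict_databases n W)"
  by (auto simp: is_DP_def restrict_databases_def dest: neighboring_databases)

lemma distortion_restrict_databases: "distortion n p F (restrict_databases n W) = distortion n p F W"
  by (simp add: distortion_def restrict_databases_def)

lemma mechanism_uniform:
  "mechanism n (\<lambda>(s :: 'r::finite list) r. 1 / card (databases n :: 'r list set))"
proof -
  have "0 < card (databases n :: 'r list set)"
    by (simp add: card_gt_0_iff finite_databases databases_nonempty)
  then show ?thesis
    by (simp add: mechanism_def)
qed

lemma is_DP_const:
  assumes "0 < \<theta>" "\<theta> \<le> 1" "0 \<le> c"
  shows "is_DP n \<theta> (\<lambda>s r. c)"
proof -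
  have "\<theta> * c \<le> c"
    using assms by (simp add: mult_left_le_one_le)
  moreover have "c \<le> c / \<theta>"
    using assms \<open>\<theta> * c \<le> c\<close> by (simp add: le_divide_eq mult.commute)
  ultimately show ?thesis
    by (simp add: is_DP_def)
qed

lemma exists_min_distortion_DP_mechanism:
  fixes p :: "'r::finite \<Rightarrow> real"
  assumes "0 < \<theta>" "\<theta> \<le> 1"
  obtains W :: "'r list \<Rightarrow> 'r list \<Rightarrow> real"
  where "mechanism n W" "is_DP n \<theta> W"
    "\<And>U. mechanism n U \<Longrightarrow> is_DP n \<theta> U \<Longrightarrow> distortion n p F W \<le> distortion n p F U"
proof -
  let ?M = "mechanism_box n \<inter> {W :: 'r list \<Rightarrow> 'r list \<Rightarrow> real. mechanism n W} \<inter> {W. is_DP n \<theta> W}"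
  have restrict_in_M: "restrict_databases n U \<in> ?M"
    if "mechanism n U" "is_DP n \<theta> U" for U :: "'r list \<Rightarrow> 'r list \<Rightarrow> real"
    using that by (simp add: restrict_databases_in_mechanism_box mechanism_restrict_databases
        is_DP_restrict_databases)
  have "compact ?M"
    using compact_mechanism_box closed_mechanisms closed_is_DP by (intro compact_Int_closed)
  moreover have "?M \<noteq> {}"
    using restrict_in_M[OF mechanism_uniform is_DP_const[OF assms]] by auto
  ultimately have "\<exists>W\<in>?M. \<forall>V\<in>?M. distortion n p F W \<le> distortion n p F V"
    using continuous_on_distortion by (rule continuous_attains_inf)
  then obtain W where W: "W \<in> ?M" and min: "\<forall>V\<in>?M. distortion n p F W \<le> distortion n p F V" ..
  show thesis
  proof (rule that)
    show "mechanism n W" "is_DP n \<theta> W"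
      using W by simp_all
    show "distortion n p F W \<le> distortion n p F U" if "mechanism n U" "is_DP n \<theta> U" for U
      using bspec[OF min restrict_in_M[OF that]] by (simp add: distortion_restrict_databases)
  qed
qed

theorem lemma1:
  fixes n :: nat and \<theta> :: real and p :: "'r::finite \<Rightarrow> real"
    and F :: "('r \<Rightarrow> nat) \<Rightarrow> ('r \<Rightarrow> nat) \<Rightarrow> real"
  assumes "0 < \<theta>" and "\<theta> < 1"
    and "\<forall>a. 0 \<le> p a" and "(\<Sum>a\<in>UNIV. p a) = 1"
    and "\<forall>h\<in>hist_space n. \<forall>g\<in>hist_space n. 0 \<le> F h g"
  shows "\<exists>W. mechanism n W
     \<and> (\<forall>a\<in>databases n. \<forall>a'\<in>databases n. hist a = hist a' \<longrightarrow>
           (\<forall>b\<in>databases n. W b a = W b a'))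
     \<and> (\<forall>a a' b. neighboring n a a' \<longrightarrow> b \<in> databases n \<longrightarrow>
           \<theta> * W b a' \<le> W b a \<and> W b a \<le> W b a' / \<theta>)
     \<and> (\<forall>U. mechanism n U \<and> is_DP n \<theta> U \<longrightarrow> distortion n p F W \<le> distortion n p F U)"
proof -
  obtain W0 :: "'r list \<Rightarrow> 'r list \<Rightarrow> real" where W0: "mechanism n W0" "is_DP n \<theta> W0"
    and min: "\<And>U. mechanism n U \<Longrightarrow> is_DP n \<theta> U \<Longrightarrow> distortion n p F W0 \<le> distortion n p F U"
    using exists_min_distortion_DP_mechanism[of \<theta> n p F] assms(1,2) by auto
  define W where "W = permutation_average n W0"
  have "mechanism n W"
    using W0(1) by (simp add: W_def mechanism_permutation_average)
  moreover have "W b a = W b a'" if "a \<in> databases n" "hist a = hist a'" for a a' b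
    using that by (simp add: W_def databases_def permutation_average_hist_eq)
  moreover have "\<theta> * W b a' \<le> W b a \<and> W b a \<le> W b a' / \<theta>"
    if "neighboring n a a'" "b \<in> databases n" for a a' b
    using is_DP_permutation_average[OF W0(2)] neighboring_sym[OF that(1)] that(2)
    by (simp add: W_def is_DP_def)
  moreover have "distortion n p F W \<le> distortion n p F U" if "mechanism n U" "is_DP n \<theta> U" for U
    using min[OF that] by (simp add: W_def distortion_permutation_average)
  ultimately show ?thesis
    by blast
qed

end
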